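(* Let $r\geq 3$ and $k\geq 2$, and let $G$ be an $r$-graph that is $(rk-2k+2,k)$-free. Let $u,v$ be distinct vertices of $G$ and let $F_1,\dots,F_s\subseteq G$ be pairwise edge-disjoint subgraphs. Then the sumset $\sum_{i=1}^s C_{F_i}(uv)=\{\sum_{i=1}^s m_i : m_i\in C_{F_i}(uv)\}$ does not contain $k$.
   Context: An $r$-graph is an $r$-uniform hypergraph; subgraphs are identified with their edge sets. An $(s,k)$-configuration is an $r$-graph with exactly $k$ edges and at most $s$ vertices; $(s,k)$-free means containing no such subgraph. For an $r$-graph $F$ and distinct vertices $x,y$, $C_F(xy)$ is the set of integers $i\geq 0$ for which there exist $i$ distinct edges $X_1,\dots,X_i$ of $F$ with $|\{x,y\}\cup\bigcup_{j=1}^iX_j|\le ri-2i+2$ (so $0\in C_F(xy)$ always). *)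

theory Defs
  imports Main
begin

definition r_graph :: "nat \<Rightarrow> 'a set set \<Rightarrow> bool" where
  "r_graph r G \<longleftrightarrow> (\<forall>e\<in>G. card e = r)"

definition configuration :: "nat \<Rightarrow> nat \<Rightarrow> 'a set set \<Rightarrow> bool" where
  "configuration s k H \<longleftrightarrow> finite H \<and> card H = k \<and> finite (\<Union>H) \<and> card (\<Union>H) \<le> s"

definition sk_free :: "nat \<Rightarrow> nat \<Rightarrow> 'a set set \<Rightarrow> bool" where
  "sk_free s k G \<longleftrightarrow> \<not> (\<exists>H\<subseteq>G. configuration s k H)"

definition C_set :: "nat \<Rightarrow> 'a set set \<Rightarrow> 'a \<Rightarrow> 'a \<Rightarrow> nat set" where
  "C_set r F x y = {i. \<exists>X\<subseteq>F. finite X \<and> card X = i \<and>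
      finite ({x, y} \<union> \<Union>X) \<and> card ({x, y} \<union> \<Union>X) \<le> r * i - 2 * i + 2}"

end

theory Submission
  imports Defs
begin

text \<open>Pick for every \<open>i\<close> a witness set \<open>X\<^sub>i \<subseteq> F\<^sub>i\<close> of \<open>m\<^sub>i\<close> edges spanning, together with
  \<open>u, v\<close>, at most \<open>(r - 2) m\<^sub>i + 2\<close> vertices. The \<open>F\<^sub>i\<close> are edge-disjoint, so the union of the
  \<open>X\<^sub>i\<close> has exactly \<open>k = \<Sum> m\<^sub>i\<close> edges; and since all vertex sets share \<open>u\<close> and \<open>v\<close>, their union
  has at most \<open>(r - 2) k + 2\<close> vertices. This is an \<open>(rk - 2k + 2, k)\<close>-configuration in \<open>G\<close>.\<close>

lemma card_Un_le_shared_pair: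
  assumes "finite S" "finite T" "{u, v} \<subseteq> S" "{u, v} \<subseteq> T" "u \<noteq> v"
  shows "card (S \<union> T) + 2 \<le> card S + card T"
proof -
  have "S \<union> T = S \<union> (T - {u, v})" using assms by auto
  hence "card (S \<union> T) \<le> card S + card (T - {u, v})" by (metis card_Un_le)
  moreover have "card (T - {u, v}) = card T - 2" using assms by (simp add: card_Diff_subset)
  moreover have "card T \<ge> 2" using assms by (metis card_2_iff card_mono)
  ultimately show ?thesis by linarith
qed

lemma card_UN_shared_pair_le:
  fixes A :: "nat \<Rightarrow> 'a set" and c :: "nat \<Rightarrow> nat"
  assumes fin: "\<And>i. i < n \<Longrightarrow> finite (A i)"
    and uv_in: "\<And>i. i < n \<Longrightarrow> {u, v} \<subseteq> A i"
    and bound: "\<And>i. i < n \<Longrightarrow> card (A i) \<le> c i + 2"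
    and "u \<noteq> v"
  shows "card ({u, v} \<union> (\<Union>i<n. A i)) \<le> (\<Sum>i<n. c i) + 2"
  using fin uv_in bound
proof (induction n)
  case 0
  then show ?case using \<open>u \<noteq> v\<close> by simp
next
  case (Suc n)
  let ?S = "{u, v} \<union> (\<Union>i<n. A i)"
  have IH: "card ?S \<le> (\<Sum>i<n. c i) + 2" using Suc by simp
  have "{u, v} \<union> (\<Union>i<Suc n. A i) = ?S \<union> A n"
    using Suc.prems(2) by (auto simp: lessThan_Suc)
  moreover have "card (?S \<union> A n) + 2 \<le> card ?S + card (A n)"
    using Suc.prems \<open>u \<noteq> v\<close> by (intro card_Un_le_shared_pair) auto
  moreover have "card (A n) \<le> c n + 2" using Suc.prems by simp
  ultimately show ?case using IH by simp
qed

lemma C_set_sum_witness: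
  fixes F :: "nat \<Rightarrow> 'a set set" and m :: "nat \<Rightarrow> nat"
  assumes "u \<noteq> v"
    and disjoint: "\<And>i j. i < s \<Longrightarrow> j < s \<Longrightarrow> i \<noteq> j \<Longrightarrow> F i \<inter> F j = {}"
    and m: "\<And>i. i < s \<Longrightarrow> m i \<in> C_set r (F i) u v"
  obtains Y where "Y \<subseteq> (\<Union>i<s. F i)" "finite Y" "card Y = (\<Sum>i<s. m i)"
    "finite (\<Union>Y)" "card (\<Union>Y) \<le> (r - 2) * (\<Sum>i<s. m i) + 2"
proof -
  have "\<forall>i<s. \<exists>X. X \<subseteq> F i \<and> finite X \<and> card X = m i \<and>
      finite ({u, v} \<union> \<Union>X) \<and> card ({u, v} \<union> \<Union>X) \<le> (r - 2) * m i + 2"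
    using m by (simp add: C_set_def diff_mult_distrib)
  then obtain X where X: "\<And>i. i < s \<Longrightarrow> X i \<subseteq> F i \<and> finite (X i) \<and> card (X i) = m i \<and>
      finite ({u, v} \<union> \<Union>(X i)) \<and> card ({u, v} \<union> \<Union>(X i)) \<le> (r - 2) * m i + 2"
    by metis
  define Y where "Y = (\<Union>i<s. X i)"
  have "card Y = (\<Sum>i<s. card (X i))"
    unfolding Y_def by (rule card_UN_disjoint) (use X disjoint in blast)+
  hence card_Y: "card Y = (\<Sum>i<s. m i)" using X by simp
  let ?V = "{u, v} \<union> (\<Union>i<s. {u, v} \<union> \<Union>(X i))"
  have "card ?V \<le> (\<Sum>i<s. (r - 2) * m i) + 2"
    using X \<open>u \<noteq> v\<close> by (intro card_UN_shared_pair_le) auto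
  hence "card ?V \<le> (r - 2) * (\<Sum>i<s. m i) + 2" by (simp add: sum_distrib_left)
  moreover have "finite ?V" using X by auto
  moreover have "\<Union>Y \<subseteq> ?V" unfolding Y_def by blast
  ultimately have "finite (\<Union>Y)" "card (\<Union>Y) \<le> (r - 2) * (\<Sum>i<s. m i) + 2"
    by (meson finite_subset, meson card_mono le_trans)
  moreover have "Y \<subseteq> (\<Union>i<s. F i)" "finite Y" using X unfolding Y_def by blast+
  ultimately show ?thesis using card_Y that by blast
qed

theorem lemma5p1:
  fixes r k s :: nat and G :: "'a set set" and u v :: 'a and F :: "nat \<Rightarrow> 'a set set"
  assumes "r \<ge> 3" and "k \<ge> 2"
    and "finite G" and "r_graph r G"
    and "sk_free (r * k - 2 * k + 2) k G"
    and "u \<noteq> v"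
    and "\<And>i. i < s \<Longrightarrow> F i \<subseteq> G"
    and "\<And>i j. i < s \<Longrightarrow> j < s \<Longrightarrow> i \<noteq> j \<Longrightarrow> F i \<inter> F j = {}"
  shows "k \<notin> {(\<Sum>i<s. m i) | m. \<forall>i<s. m i \<in> C_set r (F i) u v}"
proof
  assume "k \<in> {(\<Sum>i<s. m i) | m. \<forall>i<s. m i \<in> C_set r (F i) u v}"
  then obtain m where k: "k = (\<Sum>i<s. m i)" and m: "\<forall>i<s. m i \<in> C_set r (F i) u v"
    by blast
  obtain Y where "Y \<subseteq> (\<Union>i<s. F i)" "finite Y" "card Y = k"
    "finite (\<Union>Y)" "card (\<Union>Y) \<le> (r - 2) * k + 2"
    using C_set_sum_witness[of u v s F m r] assms(6,8) m k by blast
  moreover have "(\<Union>i<s. F i) \<subseteq> G" using assms(7) by blast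
  ultimately have "Y \<subseteq> G" "configuration (r * k - 2 * k + 2) k Y"
    by (auto simp: configuration_def diff_mult_distrib)
  thus False using assms(5) by (auto simp: sk_free_def)
qed

end
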